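(* Let $\varphi:M\to M'$ be a homomorphism of abelian groups such that $\mathrm{Ker}\,\varphi$ is finite and $(\mathrm{Coker}\,\varphi)_{\mathrm{div}}=0$. If $M_{\mathrm{div}}$ or $M'_{\mathrm{div}}$ is uniquely divisible, then $\varphi$ induces an isomorphism $M_{\mathrm{div}}\xrightarrow{\cong}M'_{\mathrm{div}}$.
   Context: For an abelian group $A$, $A_{\mathrm{div}}$ denotes its maximal divisible subgroup. *)

theory Defs
  imports "HOL-Algebra.Algebra"
begin

text \<open>Abelian groups are HOL-Algebra commutative groups (written multiplicatively).
A subset H is divisible if every element of H has an n-th root in H for every n >= 1.\<close>

definition divisible_subset :: "('a, 'm) monoid_scheme \<Rightarrow> 'a set \<Rightarrow> bool" where
  "divisible_subset G H \<longleftrightarrow>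
     (\<forall>x\<in>H. \<forall>n::nat. n \<ge> 1 \<longrightarrow> (\<exists>y\<in>H. y [^]\<^bsub>G\<^esub> n = x))"

definition uniquely_divisible_subset :: "('a, 'm) monoid_scheme \<Rightarrow> 'a set \<Rightarrow> bool" where
  "uniquely_divisible_subset G H \<longleftrightarrow>
     (\<forall>x\<in>H. \<forall>n::nat. n \<ge> 1 \<longrightarrow> (\<exists>!y. y \<in> H \<and> y [^]\<^bsub>G\<^esub> n = x))"

definition div_part :: "('a, 'm) monoid_scheme \<Rightarrow> 'a set" where
  "div_part G = \<Union>{H. subgroup H G \<and> divisible_subset G H}"

definition coker :: "('a, 'm) monoid_scheme \<Rightarrow> ('b, 'n) monoid_scheme \<Rightarrow> ('a \<Rightarrow> 'b) \<Rightarrow> 'b set monoid" where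
  "coker G H f = H Mod (f ` carrier G)"

end

theory Submission
  imports Defs
begin

(* Write D = M_div and D' = M'_div. Images of divisible groups are divisible, so phi maps D into D',
   and the image of D' in Coker phi is divisible, hence trivial: D' lies in the image of phi.
   The finite kernel is killed by N = |Ker phi|. The N-th powers of the preimage of D' form a
   divisible subgroup, because n-th roots can be lifted up to a kernel element, which the N-th
   power kills; so they lie in D, and since D' consists of N-th powers, phi maps D onto D'.
   An element of D \<inter> Ker phi is N-torsion: unique divisibility of D kills it directly, and
   unique divisibility of D' kills the image of its N-th root in D, which is then itself N-torsion. *)

lemma div_part_maximal:
  assumes "subgroup H G" "divisible_subset G H"
  shows "H \<subseteq> div_part G"
  using assms unfolding div_part_def by blast

lemma (in monoid) uniquely_divisible_subset_torsion_free:
  fixes n :: nat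
  assumes "uniquely_divisible_subset G D" "\<one> \<in> D" "x \<in> D" "n \<ge> 1" "x [^] n = \<one>"
  shows "x = \<one>"
proof -
  have "\<exists>!y. y \<in> D \<and> y [^] n = \<one>"
    using assms(1,2,4) unfolding uniquely_divisible_subset_def by blast
  then show ?thesis
    using assms(2,3,5) nat_pow_one by blast
qed

lemma (in comm_group) divisible_set_mult:
  assumes "H \<subseteq> carrier G" "K \<subseteq> carrier G" "divisible_subset G H" "divisible_subset G K"
  shows "divisible_subset G (H <#> K)"
  unfolding divisible_subset_def
proof (intro ballI allI impI)
  fix x and n :: nat
  assume "x \<in> H <#> K" "n \<ge> 1"
  then obtain a b where ab: "a \<in> H" "b \<in> K" "x = a \<otimes> b"
    unfolding set_mult_def by blast
  obtain u where u: "u \<in> H" "u [^] n = a"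
    using assms(3) ab \<open>n \<ge> 1\<close> unfolding divisible_subset_def by blast
  obtain v where v: "v \<in> K" "v [^] n = b"
    using assms(4) ab \<open>n \<ge> 1\<close> unfolding divisible_subset_def by blast
  have "u \<in> carrier G" "v \<in> carrier G"
    using u v assms(1,2) by auto
  then have "(u \<otimes> v) [^] n = x"
    using u v ab by (simp add: nat_pow_distrib)
  moreover have "u \<otimes> v \<in> H <#> K"
    using u v unfolding set_mult_def by blast
  ultimately show "\<exists>y \<in> H <#> K. y [^] n = x" by blast
qed

lemma (in comm_group) div_part_divisible: "divisible_subset G (div_part G)"
  unfolding divisible_subset_def
proof (intro ballI allI impI)
  fix x and n :: nat
  assume "x \<in> div_part G" "n \<ge> 1"
  then obtain H where H: "subgroup H G" "divisible_subset G H" "x \<in> H"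
    unfolding div_part_def by blast
  then obtain y where "y \<in> H" "y [^] n = x"
    using \<open>n \<ge> 1\<close> unfolding divisible_subset_def by blast
  then show "\<exists>y \<in> div_part G. y [^] n = x"
    using div_part_maximal[OF H(1,2)] by blast
qed

lemma (in comm_group) subgroup_div_part: "subgroup (div_part G) G"
proof
  show "div_part G \<subseteq> carrier G"
    unfolding div_part_def using subgroup.subset by blast
  show "\<one> \<in> div_part G"
    using div_part_maximal[OF triv_subgroup] unfolding divisible_subset_def by auto
next
  fix x y
  assume "x \<in> div_part G" "y \<in> div_part G"
  then obtain H K where
    H: "subgroup H G" "divisible_subset G H" "x \<in> H" and
    K: "subgroup K G" "divisible_subset G K" "y \<in> K"
    unfolding div_part_def by blast
  have "H <#> K \<subseteq> div_part G"
    using H K by (simp add: div_part_maximal mult_subgroups divisible_set_mult subgroup.subset)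
  moreover have "x \<otimes> y \<in> H <#> K"
    using H K unfolding set_mult_def by blast
  ultimately show "x \<otimes> y \<in> div_part G" by blast
next
  fix x
  assume "x \<in> div_part G"
  then show "inv x \<in> div_part G"
    unfolding div_part_def by (blast intro: subgroup.m_inv_closed)
qed

lemma (in group_hom) divisible_subset_image:
  assumes "S \<subseteq> carrier G" "divisible_subset G S"
  shows "divisible_subset H (h ` S)"
  unfolding divisible_subset_def
proof (intro ballI allI impI)
  fix x and n :: nat
  assume "x \<in> h ` S" "n \<ge> 1"
  then obtain s where s: "s \<in> S" "x = h s" by blast
  then obtain t where t: "t \<in> S" "t [^] n = s"
    using assms(2) \<open>n \<ge> 1\<close> unfolding divisible_subset_def by blast
  then have "h t [^]\<^bsub>H\<^esub> n = x"
    using s assms(1) by (metis hom_nat_pow subsetD)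
  then show "\<exists>y \<in> h ` S. y [^]\<^bsub>H\<^esub> n = x"
    using t by blast
qed

lemma (in comm_group) div_part_subset_of_quotient_trivial:
  assumes "subgroup N G" "div_part (G Mod N) = {N}"
  shows "div_part G \<subseteq> N"
proof
  fix y
  assume y: "y \<in> div_part G"
  interpret N: normal N G
    using subgroup_imp_normal[OF assms(1)] .
  interpret q: group_hom G "G Mod N" "\<lambda>a. N #> a"
    using N.r_coset_hom_Mod N.factorgroup_is_group
    by (simp add: group_hom_def group_hom_axioms_def is_group)
  have "(\<lambda>a. N #> a) ` div_part G \<subseteq> div_part (G Mod N)"
    using subgroup_div_part div_part_divisible
    by (intro div_part_maximal q.subgroup_img_is_subgroup q.divisible_subset_image subgroup.subset)
  then have "N #> y = N"
    using y assms(2) by blast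
  moreover have "y \<in> N #> y"
    using y subgroup.subset[OF subgroup_div_part] assms(1) by (blast intro: rcos_self)
  ultimately show "y \<in> N" by simp
qed

lemma (in group) pow_card_subgroup_eq_one:
  assumes "subgroup K G" "finite K" "k \<in> K"
  shows "k [^] card K = \<one>"
proof -
  have carrier: "carrier (subgroup_generated G K) = K"
    using assms(1) by (rule subgroup.carrier_subgroup_generated_subgroup)
  have "k [^]\<^bsub>subgroup_generated G K\<^esub> order (subgroup_generated G K) = \<one>\<^bsub>subgroup_generated G K\<^esub>"
    using carrier assms(3) by (intro group.pow_order_eq_1 group_subgroup_generated) auto
  then show ?thesis
    using carrier by (simp add: order_def pow_subgroup_generated)
qed

lemma (in comm_group) nat_pow_hom: "(\<lambda>x. x [^] (n::nat)) \<in> hom G G"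
  by (rule homI) (simp_all add: nat_pow_distrib)

lemma (in group_hom) subgroup_vimage:
  assumes "subgroup D H"
  shows "subgroup {x \<in> carrier G. h x \<in> D} G"
proof -
  interpret D: subgroup D H by fact
  show ?thesis
    by unfold_locales auto
qed

locale comm_group_hom = group_hom G H h + G?: comm_group G + H?: comm_group H
  for G (structure) and H (structure) and h

lemma (in comm_group_hom) image_div_part_subset: "h ` div_part G \<subseteq> div_part H"
proof -
  have "div_part G \<subseteq> carrier G"
    using subgroup.subset[OF G.subgroup_div_part] .
  then show ?thesis
    using div_part_maximal subgroup_img_is_subgroup[OF G.subgroup_div_part]
      divisible_subset_image[OF _ G.div_part_divisible] by blast
qed

lemma (in comm_group_hom) divisible_pow_vimage:
  fixes n :: nat
  assumes kernel_pow: "\<And>k. k \<in> kernel G H h \<Longrightarrow> k [^] n = \<one>"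
    and "D \<subseteq> h ` carrier G" "divisible_subset H D"
  shows "divisible_subset G ((\<lambda>w. w [^] n) ` {w \<in> carrier G. h w \<in> D})"
  unfolding divisible_subset_def
proof (intro ballI allI impI)
  fix x and m :: nat
  assume "x \<in> (\<lambda>w. w [^] n) ` {w \<in> carrier G. h w \<in> D}" "m \<ge> 1"
  then obtain w where w: "w \<in> carrier G" "h w \<in> D" "x = w [^] n"
    by blast
  obtain z where z: "z \<in> D" "z [^]\<^bsub>H\<^esub> m = h w"
    using assms(3) w \<open>m \<ge> 1\<close> unfolding divisible_subset_def by blast
  obtain u where u: "u \<in> carrier G" "h u = z"
    using z assms(2) by blast
  \<comment> \<open>\<open>u [^] m\<close> and \<open>w\<close> differ by a kernel element, which is killed by the \<open>n\<close>-th power.\<close>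
  define k where "k = u [^] m \<otimes> inv w"
  have k: "k \<in> carrier G" "k [^] n = \<one>"
    using u w z by (simp_all add: k_def kernel_pow kernel_def hom_nat_pow)
  have "(u [^] n) [^] m = (u [^] m) [^] n"
    using u by (simp add: G.nat_pow_pow mult.commute)
  also have "\<dots> = (k \<otimes> w) [^] n"
    using u w by (simp add: k_def G.m_assoc)
  also have "\<dots> = x"
    using k w by (simp add: G.nat_pow_distrib)
  finally show "\<exists>y \<in> (\<lambda>w. w [^] n) ` {w \<in> carrier G. h w \<in> D}. y [^] m = x"
    using u z by blast
qed

lemma (in comm_group_hom) div_part_subset_image_div_part:
  fixes n :: nat
  assumes "n \<ge> 1" "\<And>k. k \<in> kernel G H h \<Longrightarrow> k [^] n = \<one>"
    and "div_part H \<subseteq> h ` carrier G"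
  shows "div_part H \<subseteq> h ` div_part G"
proof
  let ?S = "(\<lambda>w. w [^] n) ` {w \<in> carrier G. h w \<in> div_part H}"
  have "?S \<subseteq> div_part G"
  proof (rule div_part_maximal)
    interpret pow: group_hom G G "\<lambda>w. w [^] n"
      by (simp add: group_hom_def group_hom_axioms_def G.nat_pow_hom)
    show "subgroup ?S G"
      using pow.subgroup_img_is_subgroup subgroup_vimage H.subgroup_div_part by blast
    show "divisible_subset G ?S"
      using divisible_pow_vimage assms(2,3) H.div_part_divisible by blast
  qed
  fix y
  assume "y \<in> div_part H"
  then obtain z where z: "z \<in> div_part H" "z [^]\<^bsub>H\<^esub> n = y"
    using H.div_part_divisible assms(1) unfolding divisible_subset_def by blast
  then obtain w where w: "w \<in> carrier G" "h w = z"
    using assms(3) by blast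
  then have "w [^] n \<in> div_part G"
    using z \<open>?S \<subseteq> div_part G\<close> by blast
  moreover have "h (w [^] n) = y"
    using w z by (simp add: hom_nat_pow)
  ultimately show "y \<in> h ` div_part G" by blast
qed

lemma (in comm_group_hom) div_part_inter_kernel_trivial:
  fixes n :: nat
  assumes "n \<ge> 1" "\<And>k. k \<in> kernel G H h \<Longrightarrow> k [^] n = \<one>"
    and "uniquely_divisible_subset G (div_part G) \<or> uniquely_divisible_subset H (div_part H)"
    and x: "x \<in> div_part G" "h x = \<one>\<^bsub>H\<^esub>"
  shows "x = \<one>"
proof -
  have carrier: "div_part G \<subseteq> carrier G"
    using subgroup.subset[OF G.subgroup_div_part] .
  have kernel: "y \<in> kernel G H h" if "y \<in> div_part G" "h y = \<one>\<^bsub>H\<^esub>" for y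
    using that carrier by (auto simp: kernel_def)
  from assms(3) show ?thesis
  proof
    assume "uniquely_divisible_subset G (div_part G)"
    then show ?thesis
      using assms(1,2) x kernel subgroup.one_closed[OF G.subgroup_div_part]
      by (blast intro: G.uniquely_divisible_subset_torsion_free)
  next
    assume unique: "uniquely_divisible_subset H (div_part H)"
    obtain y where y: "y \<in> div_part G" "y [^] n = x"
      using G.div_part_divisible x assms(1) unfolding divisible_subset_def by blast
    have "h y \<in> div_part H"
      using y image_div_part_subset by blast
    moreover have "h y [^]\<^bsub>H\<^esub> n = \<one>\<^bsub>H\<^esub>"
      using y x carrier by (auto simp: hom_nat_pow[symmetric])
    ultimately have "h y = \<one>\<^bsub>H\<^esub>"
      using unique assms(1) subgroup.one_closed[OF H.subgroup_div_part]
      by (blast intro: H.uniquely_divisible_subset_torsion_free)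
    then show ?thesis
      using y kernel assms(2) by metis
  qed
qed

theorem lemma2p7:
  fixes M :: "('a, 'm) monoid_scheme" and M' :: "('b, 'n) monoid_scheme" and \<phi> :: "'a \<Rightarrow> 'b"
  assumes "comm_group M" and "comm_group M'"
    and "\<phi> \<in> hom M M'"
    and "finite (kernel M M' \<phi>)"
    and "div_part (coker M M' \<phi>) = {\<one>\<^bsub>coker M M' \<phi>\<^esub>}"
    and "uniquely_divisible_subset M (div_part M) \<or> uniquely_divisible_subset M' (div_part M')"
  shows "\<phi> \<in> iso (subgroup_generated M (div_part M)) (subgroup_generated M' (div_part M'))"
proof -
  interpret comm_group_hom M M' \<phi>
    using assms(1-3)
    by (simp add: comm_group_hom_def group_hom_def group_hom_axioms_def comm_group.axioms(2))
  let ?N = "card (kernel M M' \<phi>)"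
  have N: "?N \<ge> 1"
    using assms(4) subgroup.one_closed[OF subgroup_kernel] by (auto simp: Suc_le_eq card_gt_0_iff)
  have kernel_pow: "k [^]\<^bsub>M\<^esub> ?N = \<one>\<^bsub>M\<^esub>" if "k \<in> kernel M M' \<phi>" for k
    using G.pow_card_subgroup_eq_one[OF subgroup_kernel assms(4) that] .
  have "div_part M' \<subseteq> \<phi> ` carrier M"
    using H.div_part_subset_of_quotient_trivial[OF img_is_subgroup] assms(5)
    unfolding coker_def by simp
  then have onto: "\<phi> ` div_part M = div_part M'"
    using div_part_subset_image_div_part[OF N kernel_pow] image_div_part_subset by blast
  interpret div: group_hom "subgroup_generated M (div_part M)" "subgroup_generated M' (div_part M')" \<phi>
    using hom_between_subgroups[OF image_div_part_subset]
    by (simp add: group_hom_def group_hom_axioms_def group_subgroup_generated H.group_subgroup_generated)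
  show ?thesis
    unfolding div.iso_iff
    using onto div_part_inter_kernel_trivial[OF N kernel_pow assms(6)]
    by (simp add: subgroup.carrier_subgroup_generated_subgroup G.subgroup_div_part H.subgroup_div_part)
qed

end
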